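(* Let $n\geq 0$, $m\geq 2$ with $m$ even, and $1\leq a\leq 9$. Then $B_n \neq a\left(\frac{10^m-1}{9}\right)$. Consequently, if $B_n = a\frac{10^m-1}{9}$ for some $m\geq 2$ and $1\le a\le 9$, then $m$ is odd.
   Context: The balancing sequence $(B_n)_{n\geq 0}$ is defined by $B_0=0$, $B_1=1$ and $B_{n+1}=6B_n-B_{n-1}$ for $n\geq 1$. For $1\le a\le 9$ and $m\ge 1$, the number $a\frac{10^m-1}{9}$ is the decimal integer consisting of $m$ copies of the digit $a$. *)

theory Defs
  imports Main
begin

fun balancing :: "nat \<Rightarrow> int" where
  "balancing 0 = 0"
| "balancing (Suc 0) = 1"
| "balancing (Suc (Suc n)) = 6 * balancing (Suc n) - balancing n"

definition repdigit :: "nat \<Rightarrow> nat \<Rightarrow> int" where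
  "repdigit a m = int a * ((10 ^ m - 1) div 9)"

end

theory Submission
  imports Defs
begin

text \<open>
  The addition formula gives \<open>B(n + 6) = 6930 B(n + 1) - 1189 B(n)\<close>. Since \<open>6930 = 11 \<cdot> 630 = 10 \<cdot> 693\<close>
  and \<open>1189 \<equiv> 1 (mod 11)\<close>, \<open>1189 \<equiv> -1 (mod 10)\<close>, this yields \<open>B(n + 6) \<equiv> -B(n) (mod 11)\<close> and
  \<open>B(n + 6) \<equiv> B(n) (mod 10)\<close>, so checking \<open>n < 6\<close> shows that a balancing number divisible by 11
  is divisible by 10. The repdigit \<open>a (1 + 10 + \<dots> + 10\<^sup>m\<^sup>-\<^sup>1)\<close> ends in the digit \<open>a \<noteq> 0\<close>, but for
  even \<open>m\<close> its repunit factor is divisible by \<open>1 + 10 = 11\<close>.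
\<close>

lemma repunit_eq_sum_powers:
  fixes b :: int
  assumes "b \<noteq> 1"
  shows "(b ^ m - 1) div (b - 1) = (\<Sum>i<m. b ^ i)"
  using assms by (simp add: power_diff_1_eq)

lemma dvd_sum_powers_minus_1:
  fixes b :: "'a::comm_ring_1"
  assumes "m \<noteq> 0"
  shows "b dvd (\<Sum>i<m. b ^ i) - 1"
proof -
  obtain k where "m = Suc k" using assms not0_implies_Suc by blast
  then have "(\<Sum>i<m. b ^ i) - 1 = b * (\<Sum>i<k. b ^ i)"
    by (simp only: sum.lessThan_Suc_shift) (simp add: sum_distrib_left)
  then show ?thesis by simp
qed

lemma sum_powers_even:
  fixes b :: "'a::comm_semiring_1"
  shows "(\<Sum>i<2 * k. b ^ i) = (1 + b) * (\<Sum>i<k. (b ^ 2) ^ i)"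
  by (induction k) (simp_all add: algebra_simps power2_eq_square power_mult)

lemma balancing_add:
  "balancing (m + n + 1) = balancing (m + 1) * balancing (n + 1) - balancing m * balancing n"
proof (induction n rule: balancing.induct)
  case (3 n)
  have "balancing (m + Suc (Suc n) + 1) = 6 * balancing (m + Suc n + 1) - balancing (m + n + 1)"
    by (simp flip: balancing.simps(3))
  with 3 show ?case by (simp add: algebra_simps)
qed simp_all

lemma balancing_add_6:
  "balancing (n + 6) = 6930 * balancing (n + 1) - 1189 * balancing n"
  using balancing_add[of 5 n] by (simp add: eval_nat_numeral add.commute)

lemma ten_dvd_balancing_if_eleven_dvd:
  "11 dvd balancing n \<Longrightarrow> 10 dvd balancing n"
proof (induction n rule: less_induct)
  case (less n)
  show ?case
  proof (cases "n < 6")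
    case True
    then have "n \<in> {0,1,2,3,4,5}" by auto
    with less.prems show ?thesis by (auto simp: eval_nat_numeral)
  next
    case False
    then obtain k where n: "n = k + 6" by (metis add.commute le_Suc_ex not_less)
    have "balancing n + balancing k = 11 * (630 * balancing (k + 1) - 108 * balancing k)"
      and "balancing n - balancing k = 10 * (693 * balancing (k + 1) - 119 * balancing k)"
      unfolding n balancing_add_6 by simp_all
    then have "11 dvd balancing n + balancing k" "10 dvd balancing n - balancing k"
      by (metis dvd_triv_left)+
    moreover have "11 dvd balancing k"
      using \<open>11 dvd balancing n\<close> \<open>11 dvd balancing n + balancing k\<close> by (simp add: dvd_add_right_iff)
    then have "10 dvd balancing k" using less.IH n by simp
    ultimately show ?thesis by (metis dvd_diff_commute dvd_diff_right_iff)
  qed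
qed

lemma repdigit_eq_sum_powers: "repdigit a m = int a * (\<Sum>i<m. 10 ^ i)"
  using repunit_eq_sum_powers[of 10 m] by (simp add: repdigit_def)

lemma balancing_ne_repdigit_even:
  assumes "even m" "m \<noteq> 0" "1 \<le> a" "a \<le> 9"
  shows "balancing n \<noteq> repdigit a m"
proof
  define r :: int where "r = (\<Sum>i<m. 10 ^ i)"
  assume "balancing n = repdigit a m"
  then have eq: "balancing n = int a * r"
    by (simp add: repdigit_eq_sum_powers r_def)
  obtain k where "m = 2 * k" using \<open>even m\<close> by blast
  then have "11 dvd r"
    using sum_powers_even[of "10::int" k] by (simp add: r_def)
  then have "10 dvd int a * r"
    using ten_dvd_balancing_if_eleven_dvd[of n] by (simp add: eq)
  moreover have "10 dvd int a * (r - 1)"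
    using dvd_sum_powers_minus_1[OF \<open>m \<noteq> 0\<close>, of "10::int"] by (simp add: r_def)
  ultimately have "10 dvd int a * r - int a * (r - 1)"
    by (rule dvd_diff)
  then have "int 10 dvd int a"
    by (simp add: algebra_simps)
  then have "10 dvd a"
    by (simp only: int_dvd_int_iff)
  with assms(3,4) show False
    using dvd_imp_le by fastforce
qed

theorem mainTheorem2:
  shows "(\<forall>n m a. 2 \<le> m \<and> even m \<and> 1 \<le> a \<and> a \<le> 9 \<longrightarrow> balancing n \<noteq> repdigit a m)
       \<and> (\<forall>n m a. 2 \<le> m \<and> 1 \<le> a \<and> a \<le> 9 \<and> balancing n = repdigit a m \<longrightarrow> odd m)"
  using balancing_ne_repdigit_even by (metis not_numeral_le_zero)

end
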